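(* Let $k\ge3$ and $0\le n<k-2$ be integers, let $\chi_1,\chi_2$ be primitive non-trivial Dirichlet characters with conductors $q_1,q_2$, and let $\gamma=\begin{pmatrix}a&b\\c&d\end{pmatrix}\in\Gamma_0(q_1q_2)$ with $c>0$. Then for all $u>0$, $$\Big|\sum_{A\ge1}\frac{\chi_1(A)}{A^{n+1}}\sum_{B\ge1}\overline{\chi_2}(B)B^{k-n-2}e^{2\pi AB(ia/c-u)}\Big|\ll_{k,n,c,q_2}\frac{1}{\sqrt u}.$$ *)

theory Defs
  imports Complex_Main "HOL-Number_Theory.Cong"
begin

definition dirichlet_char :: "nat \<Rightarrow> (nat \<Rightarrow> complex) \<Rightarrow> bool" where
  "dirichlet_char q \<chi> \<longleftrightarrow> q > 0 \<and> \<chi> 1 = 1 \<and>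
     (\<forall>m n. \<chi> (m * n) = \<chi> m * \<chi> n) \<and>
     (\<forall>n. \<chi> (n + q) = \<chi> n) \<and>
     (\<forall>n. \<chi> n = 0 \<longleftrightarrow> \<not> coprime n q)"

text \<open>Primitive character modulo q (so its conductor is q): no proper divisor d of q
  is an induced modulus.\<close>
definition primitive_dchar :: "nat \<Rightarrow> (nat \<Rightarrow> complex) \<Rightarrow> bool" where
  "primitive_dchar q \<chi> \<longleftrightarrow> dirichlet_char q \<chi> \<and>
     (\<forall>d. d dvd q \<and> d < q \<longrightarrow>
        \<not> (\<forall>n. coprime n q \<and> [n = 1] (mod d) \<longrightarrow> \<chi> n = 1))"

definition nontrivial_dchar :: "nat \<Rightarrow> (nat \<Rightarrow> complex) \<Rightarrow> bool" where
  "nontrivial_dchar q \<chi> \<longleftrightarrow> (\<exists>n. coprime n q \<and> \<chi> n \<noteq> 1)"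

end

theory Submission
  imports Defs "HOL-Number_Theory.Number_Theory" "HOL-Analysis.Analysis"
begin

(* For fixed A the inner series is S(z) = sum_{b >= 1} g(b) b^m z^b with g = conj chi2, which has
   period q2, and z = exp(2 pi A (i a/c - u)), so that |z| = exp(-2 pi A u).  Replacing b by b + q2
   and expanding (b + q2)^m binomially gives
     (1 - z^q2) S_m = z^q2 * sum_{i<m} binom(m,i) q2^(m-i) S_i + (q2 boundary terms),
   so by induction on m the series S_m is bounded in terms of any lower bound for |1 - z^q2|.
   Now z^q2 = exp(-2 pi A q2 u) exp(2 pi i A a / M) with M = c / q2.  If chi1(A) <> 0, then A is
   coprime to q1, which divides M, and a is coprime to c since a d - b c = 1; hence M does not divide
   A a, and Re z^q2 <= max {cos(2 pi N / M) : M does not divide N} < 1.  So S is bounded uniformly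
   in A and u.  It is also O(exp(-2 pi A u)) by comparison with a geometric series, and
   min(1, exp(-t)) <= 1 / sqrt t turns the two bounds into |S| = O((A u)^(-1/2)).  Summing against
   |chi1(A)| / A^(n+1) <= 1 / A leaves (sum_A A^(-3/2)) / sqrt u. *)

lemma conv_radius_Suc_power: "conv_radius (\<lambda>n. real (Suc n) ^ m) = 1"
proof (rule conv_radius_ratio_limit_nonzero[of _ 1])
  have "(\<lambda>n. real (Suc n) / real (Suc (Suc n))) \<longlonglongrightarrow> 1"
    by (rule LIMSEQ_Suc[OF LIMSEQ_n_over_Suc_n])
  then have "(\<lambda>n. (real (Suc n) / real (Suc (Suc n))) ^ m) \<longlonglongrightarrow> 1"
    using tendsto_power by fastforce
  then show "(\<lambda>n. norm (real (Suc n) ^ m) / norm (real (Suc (Suc n)) ^ m)) \<longlonglongrightarrow> 1"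
    by (simp add: power_divide del: of_nat_Suc)
qed (simp_all add: one_ereal_def)

lemma summable_Suc_power_geometric:
  "norm x < 1 \<Longrightarrow> summable (\<lambda>n. real (Suc n) ^ m * x ^ n)"
  by (rule summable_in_conv_radius, subst conv_radius_Suc_power) simp

definition weighted_power_series :: "(nat \<Rightarrow> complex) \<Rightarrow> nat \<Rightarrow> complex \<Rightarrow> complex" where
  "weighted_power_series g m z = (\<Sum>n. g (Suc n) * of_nat (Suc n) ^ m * z ^ Suc n)"

lemma norm_weighted_term_le:
  fixes g :: "nat \<Rightarrow> complex" and z :: complex
  assumes "norm (g (Suc n)) \<le> 1"
  shows "norm (g (Suc n) * of_nat (Suc n) ^ m * z ^ Suc n) \<le> norm z * (real (Suc n) ^ m * norm z ^ n)"
proof -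
  have "norm (g (Suc n) * of_nat (Suc n) ^ m * z ^ Suc n)
      = norm (g (Suc n)) * (norm z * (real (Suc n) ^ m * norm z ^ n))"
    by (simp add: norm_mult norm_power mult_ac del: of_nat_Suc)
  also have "\<dots> \<le> norm z * (real (Suc n) ^ m * norm z ^ n)"
    using assms by (intro mult_left_le_one_le) auto
  finally show ?thesis .
qed

lemma summable_weighted_power_series:
  fixes g :: "nat \<Rightarrow> complex" and z :: complex
  assumes "\<forall>n. norm (g n) \<le> 1" "norm z < 1"
  shows "summable (\<lambda>n. g (Suc n) * of_nat (Suc n) ^ m * z ^ Suc n)"
proof (rule summable_comparison_test')
  show "summable (\<lambda>n. norm z * (real (Suc n) ^ m * norm z ^ n))"
    using assms(2) by (intro summable_mult summable_Suc_power_geometric) simp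
qed (use assms(1) norm_weighted_term_le in blast)

lemma norm_weighted_power_series_le:
  fixes g :: "nat \<Rightarrow> complex" and z :: complex
  assumes "\<forall>n. norm (g n) \<le> 1" "norm z \<le> \<rho>" "\<rho> < 1"
  shows "norm (weighted_power_series g m z) \<le> norm z * (\<Sum>n. real (Suc n) ^ m * \<rho> ^ n)"
proof -
  have \<rho>: "summable (\<lambda>n. real (Suc n) ^ m * \<rho> ^ n)"
    using assms(3) order.trans[OF norm_ge_zero assms(2)]
    by (intro summable_Suc_power_geometric) simp
  have "norm (weighted_power_series g m z) \<le> (\<Sum>n. norm z * (real (Suc n) ^ m * \<rho> ^ n))"
    unfolding weighted_power_series_def
  proof (rule norm_suminf_le)
    fix n
    have "norm z ^ n \<le> \<rho> ^ n"
      using assms(2) by (intro power_mono) auto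
    have "norm (g (Suc n) * of_nat (Suc n) ^ m * z ^ Suc n) \<le> norm z * (real (Suc n) ^ m * norm z ^ n)"
      using assms(1) by (intro norm_weighted_term_le) blast
    also have "\<dots> \<le> norm z * (real (Suc n) ^ m * \<rho> ^ n)"
      using \<open>norm z ^ n \<le> \<rho> ^ n\<close> by (intro mult_left_mono) auto
    finally show "norm (g (Suc n) * of_nat (Suc n) ^ m * z ^ Suc n) \<le> norm z * (real (Suc n) ^ m * \<rho> ^ n)" .
  qed (intro summable_mult \<rho>)
  also have "\<dots> = norm z * (\<Sum>n. real (Suc n) ^ m * \<rho> ^ n)"
    using \<rho> by (rule suminf_mult)
  finally show ?thesis .
qed

lemma weighted_power_series_shift:
  assumes per: "\<forall>n. g (n + p) = g n" and g: "\<forall>n. norm (g n) \<le> 1" and z: "norm z < 1"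
  shows "(1 - z ^ p) * weighted_power_series g m z
    = z ^ p * (\<Sum>i<m. of_nat (m choose i) * of_nat p ^ (m - i) * weighted_power_series g i z)
      + (\<Sum>n<p. g (Suc n) * of_nat (Suc n) ^ m * z ^ Suc n)"
proof -
  define f where "f i n = g (Suc n) * of_nat (Suc n) ^ i * z ^ Suc n" for i n
  define T where "T i = weighted_power_series g i z" for i
  have summable_f: "summable (f i)" for i
    unfolding f_def using g z by (rule summable_weighted_power_series)
  have shifted: "f m (n + p) = z ^ p * (\<Sum>i\<le>m. of_nat (m choose i) * of_nat p ^ (m - i) * f i n)" for n
  proof -
    have "(of_nat (Suc (n + p)) :: complex) ^ m = (of_nat (Suc n) + of_nat p) ^ m"
      by (simp add: add_ac)
    also have "\<dots> = (\<Sum>i\<le>m. of_nat (m choose i) * of_nat (Suc n) ^ i * of_nat p ^ (m - i))"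
      by (rule binomial_ring)
    finally show ?thesis
      using per[rule_format, of "Suc n"]
      by (simp add: f_def sum_distrib_left sum_distrib_right power_add mult_ac del: of_nat_Suc)
  qed
  have "T m = (\<Sum>n. f m (n + p)) + (\<Sum>n<p. f m n)"
    unfolding T_def weighted_power_series_def f_def[symmetric] using summable_f by (rule suminf_split_initial_segment)
  also have "(\<Sum>n. f m (n + p)) = z ^ p * (\<Sum>n. \<Sum>i\<le>m. of_nat (m choose i) * of_nat p ^ (m - i) * f i n)"
    unfolding shifted by (intro suminf_mult summable_sum summable_mult summable_f)
  also have "(\<Sum>n. \<Sum>i\<le>m. of_nat (m choose i) * of_nat p ^ (m - i) * f i n)
      = (\<Sum>i\<le>m. of_nat (m choose i) * of_nat p ^ (m - i) * T i)"
    unfolding T_def weighted_power_series_def f_def[symmetric]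
    by (subst suminf_sum) (auto intro!: sum.cong suminf_mult summable_mult summable_f)
  also have "\<dots> = (\<Sum>i<m. of_nat (m choose i) * of_nat p ^ (m - i) * T i) + T m"
    by (simp add: lessThan_Suc_atMost[symmetric])
  finally show ?thesis
    unfolding T_def f_def by (simp add: algebra_simps)
qed

lemma norm_weighted_initial_sum_le:
  fixes g :: "nat \<Rightarrow> complex" and z :: complex
  assumes "\<forall>n. norm (g n) \<le> 1" "norm z \<le> 1"
  shows "norm (\<Sum>n<p. g (Suc n) * of_nat (Suc n) ^ m * z ^ Suc n) \<le> real p ^ Suc m"
proof (rule order.trans[OF norm_sum])
  have "norm (g (Suc n) * of_nat (Suc n) ^ m * z ^ Suc n) \<le> real p ^ m" if "n < p" for n
  proof -
    have "norm (g (Suc n) * of_nat (Suc n) ^ m * z ^ Suc n) \<le> norm z * (real (Suc n) ^ m * norm z ^ n)"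
      using assms(1) by (intro norm_weighted_term_le) blast
    also have "\<dots> \<le> 1 * (real p ^ m * 1)"
      using assms(2) that by (intro mult_mono power_mono power_le_one) auto
    finally show ?thesis by simp
  qed
  then have "(\<Sum>n<p. norm (g (Suc n) * of_nat (Suc n) ^ m * z ^ Suc n)) \<le> (\<Sum>n<p. real p ^ m)"
    by (intro sum_mono) simp
  then show "(\<Sum>n<p. norm (g (Suc n) * of_nat (Suc n) ^ m * z ^ Suc n)) \<le> real p ^ Suc m"
    by simp
qed

lemma weighted_power_series_bounded:
  assumes "\<delta> > 0"
  shows "\<exists>K. \<forall>g z. (\<forall>n. g (n + p) = g n) \<and> (\<forall>n. norm (g n) \<le> 1) \<and> norm z < 1 \<and> \<delta> \<le> norm (1 - z ^ p)
    \<longrightarrow> norm (weighted_power_series g m z) \<le> K" (is "\<exists>K. ?bound m K")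
proof (induction m rule: less_induct)
  case (less m)
  then have "\<forall>i. \<exists>K. i < m \<longrightarrow> ?bound i K"
    by blast
  then obtain K where K: "\<forall>i. i < m \<longrightarrow> ?bound i (K i)"
    by (metis choice)
  define R where "R = (\<Sum>i<m. real (m choose i) * real p ^ (m - i) * K i)"
  show ?case
  proof (intro exI[of _ "(R + real p ^ Suc m) / \<delta>"] allI impI)
    fix g :: "nat \<Rightarrow> complex" and z :: complex
    assume hyp: "(\<forall>n. g (n + p) = g n) \<and> (\<forall>n. norm (g n) \<le> 1) \<and> norm z < 1 \<and> \<delta> \<le> norm (1 - z ^ p)"
    then have g: "\<forall>n. norm (g n) \<le> 1" and z: "norm z < 1" by auto
    have lower_terms: "norm (\<Sum>i<m. of_nat (m choose i) * of_nat p ^ (m - i) * weighted_power_series g i z) \<le> R"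
      unfolding R_def
    proof (rule order.trans[OF norm_sum sum_mono])
      fix i
      assume "i \<in> {..<m}"
      with K hyp have "norm (weighted_power_series g i z) \<le> K i"
        by blast
      then show "norm (of_nat (m choose i) * of_nat p ^ (m - i) * weighted_power_series g i z)
          \<le> real (m choose i) * real p ^ (m - i) * K i"
        by (simp add: norm_mult norm_power mult_left_mono)
    qed
    have "\<delta> * norm (weighted_power_series g m z) \<le> norm ((1 - z ^ p) * weighted_power_series g m z)"
      using hyp by (simp add: norm_mult mult_right_mono)
    also have "\<dots> \<le> norm (z ^ p) * R + real p ^ Suc m"
      unfolding weighted_power_series_shift[OF conjunct1[OF hyp] g z]
      by (intro order.trans[OF norm_triangle_ineq] add_mono order.trans[OF norm_mult_ineq]
          mult_left_mono lower_terms norm_weighted_initial_sum_le g less_imp_le[OF z]) simp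
    also have "\<dots> \<le> R + real p ^ Suc m"
      using z order.trans[OF norm_ge_zero lower_terms]
      by (simp add: norm_power mult_left_le_one_le power_le_one)
    finally show "norm (weighted_power_series g m z) \<le> (R + real p ^ Suc m) / \<delta>"
      using assms by (simp add: field_simps)
  qed
qed

lemma cos_two_pi_frac_bounded:
  fixes M :: int
  assumes "M > 0"
  obtains x0 where "0 \<le> x0" "x0 < 1" "\<And>N. \<not> M dvd N \<Longrightarrow> cos (2 * pi * of_int N / of_int M) \<le> x0"
proof -
  define c where "c N = cos (2 * pi * of_int N / of_int M)" for N
  have c_mod: "c N = c (N mod M)" for N
  proof -
    have "of_int N = of_int (N mod M) + of_int M * (of_int (N div M) :: real)"
      by (metis of_int_add of_int_mult mod_mult_div_eq)
    then have "2 * pi * of_int N / of_int M = 2 * pi * of_int (N mod M) / of_int M + 2 * pi * of_int (N div M)"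
      using assms by (simp add: field_simps)
    then show ?thesis
      by (simp add: c_def cos_add)
  qed
  have c_lt_1: "c N < 1" if "\<not> M dvd N" for N
  proof -
    have "c N \<noteq> 1"
    proof
      assume "c N = 1"
      then obtain n :: int where "2 * pi * of_int N / of_int M = of_int n * 2 * pi"
        unfolding c_def cos_one_2pi_int by blast
      then have "N = n * M"
        using assms by (simp add: field_simps) (metis of_int_eq_iff of_int_mult)
      with that show False
        by simp
    qed
    then show ?thesis
      unfolding c_def using cos_le_one by (simp add: order_less_le)
  qed
  define V where "V = insert 0 (c ` {1..<M})"
  have V: "finite V" "V \<noteq> {}"
    unfolding V_def by auto
  show ?thesis
  proof
    show "0 \<le> Max V"
      using V by (simp add: V_def)
    show "Max V < 1"
      using V by (auto simp: V_def intro!: c_lt_1 dest: zdvd_imp_le)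
    show "cos (2 * pi * of_int N / of_int M) \<le> Max V" if "\<not> M dvd N" for N
    proof -
      have "0 \<le> N mod M" "N mod M < M" "N mod M \<noteq> 0"
        using that assms by (simp_all add: dvd_eq_mod_eq_0)
      then have "c (N mod M) \<in> V"
        by (simp add: V_def)
      then show ?thesis
        using V c_mod[of N] by (simp add: c_def)
    qed
  qed
qed

lemma norm_one_minus_exp_ge:
  fixes z :: complex
  assumes "Re z \<le> 0" "cos (Im z) \<le> x0" "0 \<le> x0"
  shows "1 - x0 \<le> norm (1 - exp z)"
proof -
  have "exp (Re z) * cos (Im z) \<le> x0"
  proof (cases "cos (Im z) \<ge> 0")
    case True
    then have "exp (Re z) * cos (Im z) \<le> 1 * cos (Im z)"
      using assms(1) by (intro mult_right_mono) auto
    then show ?thesis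
      using assms(2) by simp
  next
    case False
    then show ?thesis
      using assms(3) by (simp add: mult_nonneg_nonpos order_trans[OF _ assms(3)])
  qed
  then have "1 - x0 \<le> Re (1 - exp z)"
    by (simp add: Re_exp)
  also have "\<dots> \<le> norm (1 - exp z)"
    by (rule complex_Re_le_cmod)
  finally show ?thesis .
qed

lemma exp_neg_le_inverse_sqrt:
  fixes t :: real
  assumes "1 \<le> t"
  shows "exp (- t) \<le> 1 / sqrt t"
proof -
  have "sqrt t \<le> t"
    using assms real_sqrt_le_iff[of t "t^2"] by (simp add: power2_eq_square)
  also have "t \<le> exp t"
    using exp_ge_add_one_self[of t] by linarith
  finally show ?thesis
    using assms by (simp add: exp_minus field_simps)
qed

lemma le_max_div_sqrt_of_exp_decay:
  fixes x t K1 K2 :: real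
  assumes "x \<le> K1" "1 \<le> t \<Longrightarrow> x \<le> exp (- t) * K2" "0 < t" "0 \<le> K2"
  shows "x \<le> max K1 K2 / sqrt t"
proof (cases "t < 1")
  case True
  then have "max K1 K2 \<le> max K1 K2 / sqrt t"
    using assms(3,4) by (simp add: le_divide_eq mult_left_le)
  then show ?thesis
    using assms(1) by linarith
next
  case False
  then have "x \<le> K2 / sqrt t"
    using assms(2,4) exp_neg_le_inverse_sqrt[of t] mult_right_mono[of _ _ K2] by fastforce
  also have "\<dots> \<le> max K1 K2 / sqrt t"
    using assms(3) by (intro divide_right_mono) auto
  finally show ?thesis .
qed

lemma norm_one_minus_exp_power_ge:
  fixes p A :: nat and a c M :: int and u x0 :: real
  assumes "c = int p * M" "p > 0" "M > 0" "0 \<le> u" "0 \<le> x0"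
    and "cos (2 * pi * of_int (int A * a) / of_int M) \<le> x0"
  shows "1 - x0 \<le> norm (1 - exp (2 * of_real pi * of_nat A * (\<i> * of_int a / of_int c - of_real u)) ^ p)"
proof -
  define w where "w = of_nat p * (2 * of_real pi * of_nat A * (\<i> * of_int a / of_int c - of_real u))"
  have "Re w \<le> 0"
    using assms(4) by (simp add: w_def)
  moreover have "Im w = 2 * pi * of_int (int A * a) / of_int M"
    using assms(1-3) by (simp add: w_def field_simps)
  ultimately have "1 - x0 \<le> norm (1 - exp w)"
    using assms(5,6) by (intro norm_one_minus_exp_ge) auto
  then show ?thesis
    by (simp add: w_def exp_of_nat_mult)
qed

lemma weighted_power_series_exp:
  fixes g :: "nat \<Rightarrow> complex" and y X :: complex
  shows "(\<Sum>n. g (Suc n) * of_nat (Suc n) ^ m * exp (y * of_nat (Suc n) * X))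
    = weighted_power_series g m (exp (y * X))"
  unfolding weighted_power_series_def exp_of_nat_mult[symmetric] by (simp add: mult_ac)

lemma exp_weighted_series_bound:
  fixes p m :: nat and c :: int
  assumes "p > 0" "int p dvd c" "c > 0"
  obtains K where "0 \<le> K"
    "\<And>g a A u. \<forall>n. g (n + p) = g n \<Longrightarrow> \<forall>n. norm (g n) \<le> 1 \<Longrightarrow> 0 < u \<Longrightarrow>
      \<not> c div int p dvd int (Suc A) * a \<Longrightarrow>
      norm (\<Sum>B. g (Suc B) * of_nat (Suc B) ^ m *
        exp (2 * of_real pi * of_nat (Suc A) * of_nat (Suc B) * (\<i> * of_int a / of_int c - of_real u)))
      \<le> K / sqrt (real (Suc A) * u)"
proof -
  define M where "M = c div int p"
  have c: "c = int p * M"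
    using assms(2) by (simp add: M_def)
  with assms have "M > 0"
    by (simp add: zero_less_mult_iff)
  then obtain x0 where x0: "0 \<le> x0" "x0 < 1"
    and cos_le: "\<And>N. \<not> M dvd N \<Longrightarrow> cos (2 * pi * of_int N / of_int M) \<le> x0"
    using cos_two_pi_frac_bounded by blast
  obtain K1 where K1: "\<forall>g z. (\<forall>n. g (n + p) = g n) \<and> (\<forall>n. norm (g n) \<le> 1) \<and> norm z < 1
      \<and> 1 - x0 \<le> norm (1 - z ^ p) \<longrightarrow> norm (weighted_power_series g m z) \<le> K1"
    using weighted_power_series_bounded[of "1 - x0" p m] x0 by auto
  define K2 where "K2 = (\<Sum>n. real (Suc n) ^ m * exp (-1) ^ n)"
  have "0 \<le> K2"
    unfolding K2_def by (intro suminf_nonneg summable_Suc_power_geometric) auto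
  show ?thesis
  proof (rule that[of "max K1 K2"], goal_cases)
    case 1
    show ?case
      using \<open>0 \<le> K2\<close> by simp
  next
    case (2 g a A u)
    define t where "t = 2 * pi * real (Suc A) * u"
    define z where "z = exp (2 * of_real pi * of_nat (Suc A) * (\<i> * of_int a / of_int c - of_real u))"
    have "0 < t"
      using 2(3) by (simp add: t_def)
    have norm_z: "norm z = exp (- t)"
      by (simp add: z_def t_def)
    have "norm z < 1"
      using \<open>0 < t\<close> by (simp add: norm_z)
    moreover have "1 - x0 \<le> norm (1 - z ^ p)"
      unfolding z_def using 2(3) x0(1) cos_le[OF 2(4)[folded M_def]]
      by (intro norm_one_minus_exp_power_ge[OF c assms(1) \<open>M > 0\<close>]) auto
    ultimately have "norm (weighted_power_series g m z) \<le> K1"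
      using K1 2(1,2) by blast
    moreover have "norm (weighted_power_series g m z) \<le> exp (- t) * K2" if "1 \<le> t"
      using norm_weighted_power_series_le[OF 2(2), of z "exp (-1)" m] norm_z that
      by (simp add: K2_def mult.commute)
    ultimately have "norm (weighted_power_series g m z) \<le> max K1 K2 / sqrt t"
      using \<open>0 \<le> K2\<close> \<open>0 < t\<close> by (intro le_max_div_sqrt_of_exp_decay)
    also have "\<dots> \<le> max K1 K2 / sqrt (real (Suc A) * u)"
      using \<open>0 \<le> K2\<close> 2(3) pi_gt3 by (intro divide_left_mono) (auto simp: t_def)
    finally show ?case
      unfolding weighted_power_series_exp z_def[symmetric] .
  qed
qed

lemma dirichlet_char_add_mult:
  assumes "dirichlet_char q \<psi>"
  shows "\<psi> (x + j * q) = \<psi> x"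
proof (induction j)
  case (Suc j)
  have "\<psi> (x + Suc j * q) = \<psi> ((x + j * q) + q)"
    by (simp add: add_ac)
  with Suc assms show ?case
    unfolding dirichlet_char_def by simp
qed simp

lemma dirichlet_char_mod:
  assumes "dirichlet_char q \<psi>"
  shows "\<psi> (x mod q) = \<psi> x"
  using dirichlet_char_add_mult[OF assms, of "x mod q" "x div q"] by simp

lemma dirichlet_char_power:
  assumes "dirichlet_char q \<psi>"
  shows "\<psi> (x ^ j) = \<psi> x ^ j"
  using assms unfolding dirichlet_char_def by (induction j) simp_all

lemma norm_dirichlet_char_le_1:
  assumes "dirichlet_char q \<psi>"
  shows "norm (\<psi> x) \<le> 1"
proof (cases "coprime x q")
  case True
  have q: "q > 0" and one: "\<psi> 1 = 1"
    using assms unfolding dirichlet_char_def by auto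
  have "x ^ totient q mod q = 1 mod q"
    using euler_theorem[OF True] by (simp only: Cong.cong_def)
  then have "\<psi> x ^ totient q = 1"
    using dirichlet_char_mod[OF assms] by (metis dirichlet_char_power[OF assms] one)
  then have "norm (\<psi> x) ^ totient q = 1"
    by (metis norm_one norm_power)
  moreover have "totient q > 0"
    using q by simp
  ultimately show ?thesis
    using power_eq_imp_eq_base[of "norm (\<psi> x)" "totient q" 1] by simp
next
  case False
  with assms have "\<psi> x = 0"
    unfolding dirichlet_char_def by blast
  then show ?thesis
    by simp
qed

lemma primitive_nontrivial_dchar:
  assumes "primitive_dchar q \<psi>" "nontrivial_dchar q \<psi>"
  shows "dirichlet_char q \<psi>" "1 < q"
proof -
  show \<psi>: "dirichlet_char q \<psi>"
    using assms(1) unfolding primitive_dchar_def by blast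
  show "1 < q"
  proof (rule ccontr)
    assume "\<not> 1 < q"
    with \<psi> have "q = 1"
      unfolding dirichlet_char_def by simp
    then have "\<psi> x = \<psi> 1" for x
      using dirichlet_char_mod[OF \<psi>, of x] dirichlet_char_mod[OF \<psi>, of 1] by simp
    with \<psi> have "\<psi> x = 1" for x
      unfolding dirichlet_char_def by simp
    with assms(2) show False
      unfolding nontrivial_dchar_def by blast
  qed
qed

lemma coprime_if_det_eq_1:
  fixes a b c d :: int
  assumes "a * d - b * c = 1"
  shows "coprime a c"
proof (rule coprimeI)
  fix x
  assume "x dvd a" "x dvd c"
  then have "x dvd a * d - b * c"
    by (simp add: dvd_diff)
  with assms show "is_unit x"
    by simp
qed

lemma not_dvd_mult_if_coprime:
  fixes A q M a :: "'a :: semiring_gcd"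
  assumes "coprime A q" "\<not> is_unit q" "q dvd M" "coprime a M"
  shows "\<not> M dvd A * a"
proof
  assume "M dvd A * a"
  with assms(4) have "M dvd A"
    by (simp add: coprime_commute coprime_dvd_mult_left_iff)
  with assms(3) have "q dvd A"
    by (rule dvd_trans)
  have "is_unit q"
    using assms(1) \<open>q dvd A\<close> dvd_refl by (rule coprime_common_divisor)
  with assms(2) show False
    by contradiction
qed

lemma summable_Suc_powr_neg_three_halves: "summable (\<lambda>A. real (Suc A) powr (-3/2))"
  using summable_ignore_initial_segment[of "\<lambda>n. real n powr (-3/2)" 1]
  by (simp add: summable_real_powr_iff)

lemma norm_suminf_div_power_le:
  fixes x y :: "nat \<Rightarrow> complex" and K u :: real
  assumes x: "\<And>A. norm (x A) \<le> 1" and y: "\<And>A. x A \<noteq> 0 \<Longrightarrow> norm (y A) \<le> K / sqrt (real (Suc A) * u)"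
    and "0 < u" "0 \<le> K"
  shows "norm (\<Sum>A. x A / of_nat (Suc A) ^ (n + 1) * y A) \<le> K * (\<Sum>A. real (Suc A) powr (-3/2)) / sqrt u"
proof -
  have term_le: "norm (x A / of_nat (Suc A) ^ (n + 1) * y A) \<le> K / sqrt u * real (Suc A) powr (-3/2)" for A
  proof (cases "x A = 0")
    case False
    define s where "s = real (Suc A)"
    have s: "1 \<le> s"
      by (simp add: s_def)
    have "norm (x A / of_nat (Suc A) ^ (n + 1) * y A) = norm (x A) / s ^ (n + 1) * norm (y A)"
      by (simp add: s_def norm_mult norm_divide norm_power del: of_nat_Suc)
    also have "\<dots> \<le> 1 / s * (K / sqrt (s * u))"
      using x[of A] y[OF False] s power_increasing[of 1 "n + 1" s]
      by (intro mult_mono frac_le) (auto simp: s_def)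
    also have "\<dots> = K / sqrt u * s powr (-3/2)"
    proof -
      have "s powr (3/2) = s * sqrt s"
        using powr_add[of s 1 "1/2"] s by (simp add: powr_half_sqrt)
      then show ?thesis
        by (simp add: real_sqrt_mult powr_minus_divide)
    qed
    finally show ?thesis
      by (simp add: s_def)
  qed (use assms in simp)
  have "norm (\<Sum>A. x A / of_nat (Suc A) ^ (n + 1) * y A) \<le> (\<Sum>A. K / sqrt u * real (Suc A) powr (-3/2))"
    using term_le by (intro norm_suminf_le summable_mult summable_Suc_powr_neg_three_halves)
  also have "\<dots> = K * (\<Sum>A. real (Suc A) powr (-3/2)) / sqrt u"
    by (subst suminf_mult[OF summable_Suc_powr_neg_three_halves]) simp
  finally show ?thesis .
qed

lemma dirichlet_double_series_bound:
  fixes p m n :: nat and c :: int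
  assumes "p > 0" "int p dvd c" "c > 0"
  shows "\<exists>C. \<forall>\<chi>1 \<chi>2 q a b d u. dirichlet_char q \<chi>1 \<and> 1 < q \<and> dirichlet_char p \<chi>2 \<and>
     a * d - b * c = 1 \<and> int (q * p) dvd c \<and> u > 0 \<longrightarrow>
     norm (\<Sum>A. \<chi>1 (Suc A) / of_nat (Suc A) ^ (n + 1) *
             (\<Sum>B. cnj (\<chi>2 (Suc B)) * of_nat (Suc B) ^ m *
                  exp (2 * of_real pi * of_nat (Suc A) * of_nat (Suc B) *
                       (\<i> * of_int a / of_int c - of_real u))))
       \<le> C / sqrt u"
proof -
  obtain K where "0 \<le> K" and K: "\<And>g a A u. \<forall>n. g (n + p) = g n \<Longrightarrow> \<forall>n. norm (g n) \<le> 1 \<Longrightarrow> 0 < u \<Longrightarrow>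
      \<not> c div int p dvd int (Suc A) * a \<Longrightarrow>
      norm (\<Sum>B. g (Suc B) * of_nat (Suc B) ^ m *
        exp (2 * of_real pi * of_nat (Suc A) * of_nat (Suc B) * (\<i> * of_int a / of_int c - of_real u)))
      \<le> K / sqrt (real (Suc A) * u)"
    using exp_weighted_series_bound[OF assms] by blast
  show ?thesis
  proof (intro exI[of _ "K * (\<Sum>A. real (Suc A) powr (-3/2))"] allI impI, elim conjE)
    fix \<chi>1 \<chi>2 :: "nat \<Rightarrow> complex" and q :: nat and a b d :: int and u :: real
    assume \<chi>1: "dirichlet_char q \<chi>1" and "1 < q" and \<chi>2: "dirichlet_char p \<chi>2"
      and det: "a * d - b * c = 1" and dvd: "int (q * p) dvd c" and "0 < u"
    have "norm (\<Sum>B. cnj (\<chi>2 (Suc B)) * of_nat (Suc B) ^ m *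
        exp (2 * of_real pi * of_nat (Suc A) * of_nat (Suc B) * (\<i> * of_int a / of_int c - of_real u)))
      \<le> K / sqrt (real (Suc A) * u)" if "\<chi>1 (Suc A) \<noteq> 0" for A
    proof (rule K[of "\<lambda>n. cnj (\<chi>2 n)"])
      show "\<forall>n. cnj (\<chi>2 (n + p)) = cnj (\<chi>2 n)"
        using \<chi>2 unfolding dirichlet_char_def by simp
      show "\<forall>n. norm (cnj (\<chi>2 n)) \<le> 1"
        using norm_dirichlet_char_le_1[OF \<chi>2] by simp
      have "coprime (Suc A) q"
        using \<chi>1 that unfolding dirichlet_char_def by blast
      then have "coprime (int (Suc A)) (int q)"
        by (simp only: coprime_int_iff)
      moreover have "int q dvd c div int p"
        using dvd assms(1,2) by (simp add: dvd_div_iff_mult)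
      moreover have "coprime a (c div int p)"
        using coprime_if_det_eq_1[OF det] assms(2) by (metis coprime_mult_right_iff dvd_div_mult_self)
      ultimately show "\<not> c div int p dvd int (Suc A) * a"
        using \<open>1 < q\<close> by (intro not_dvd_mult_if_coprime) auto
    qed (use \<open>0 < u\<close> in simp)
    then show "norm (\<Sum>A. \<chi>1 (Suc A) / of_nat (Suc A) ^ (n + 1) *
             (\<Sum>B. cnj (\<chi>2 (Suc B)) * of_nat (Suc B) ^ m *
                  exp (2 * of_real pi * of_nat (Suc A) * of_nat (Suc B) *
                       (\<i> * of_int a / of_int c - of_real u))))
       \<le> K * (\<Sum>A. real (Suc A) powr (-3/2)) / sqrt u"
      using norm_dirichlet_char_le_1[OF \<chi>1] \<open>0 < u\<close> \<open>0 \<le> K\<close> by (intro norm_suminf_div_power_le)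
  qed
qed

theorem lemma2p8:
  fixes k n q2 :: nat and c :: int
  assumes "k \<ge> 3" and "n < k - 2" and "c > 0"
  shows "\<exists>C::real. \<forall>(\<chi>1 :: nat \<Rightarrow> complex) (\<chi>2 :: nat \<Rightarrow> complex) (q1 :: nat) (a :: int) (b :: int) (d :: int) (u :: real).
     primitive_dchar q1 \<chi>1 \<and> nontrivial_dchar q1 \<chi>1 \<and>
     primitive_dchar q2 \<chi>2 \<and> nontrivial_dchar q2 \<chi>2 \<and>
     a * d - b * c = 1 \<and> int (q1 * q2) dvd c \<and> u > 0 \<longrightarrow>
     norm (\<Sum>A. \<chi>1 (Suc A) / of_nat (Suc A) ^ (n + 1) *
             (\<Sum>B. cnj (\<chi>2 (Suc B)) * of_nat (Suc B) ^ (k - n - 2) *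
                  exp (2 * of_real pi * of_nat (Suc A) * of_nat (Suc B) *
                       (\<i> * of_int a / of_int c - of_real u))))
       \<le> C / sqrt u"
proof (cases "q2 > 0 \<and> int q2 dvd c")
  case True
  then show ?thesis
    using dirichlet_double_series_bound[of q2 c n "k - n - 2"] \<open>c > 0\<close> primitive_nontrivial_dchar
    by meson
next
  case False
  have "\<not> (primitive_dchar q2 \<chi>2 \<and> int (q1 * q2) dvd c)" for \<chi>2 q1
    using False unfolding primitive_dchar_def dirichlet_char_def by (auto dest: dvd_mult_left)
  then show ?thesis
    by blast
qed

end
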